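(* Let $M$ be a modular lattice of finite length. Then $S^\delta(M)=\{a\in M: a^{+*}=a\}$, and the maps $x\mapsto x^*$ from $S(M)$ to $S^\delta(M)$ and $a\mapsto a^+$ from $S^\delta(M)$ to $S(M)$ are mutually inverse order isomorphisms (with both sets ordered as in $M$); in particular $S(M)$ and $S^\delta(M)$ are isomorphic lattices.
   Context: $M$ is a modular lattice of finite length (every chain finite) with least element $0$ and greatest element $1$. For $a\in M$: $a^*$ is the join of all elements covering $a$ if $a<1$, and $1^*=1$; $a^+$ is the meet of all elements covered by $a$ if $a>0$, and $0^+=0$; $a^{+*}=(a^+)^*$. An interval $[a,b]$ is \emph{atomistic} if every element of it is a join of atoms of $[a,b]$ (elements covering $a$). The \emph{skeleton} $S(M)$ is the set of least elements of the maximal (under inclusion) atomistic intervals of $M$; the \emph{dual skeleton} $S^\delta(M)$ is the set of greatest elements of the maximal atomistic intervals of $M$. *)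

theory Defs
  imports Main
begin

text \<open>A lattice of finite length is complete, so we work in a complete lattice type;
  its Sup/Inf are then the (unique) joins/meets determined by the order.\<close>

definition modular_lattice :: "'a::lattice itself \<Rightarrow> bool" where
  "modular_lattice _ \<longleftrightarrow> (\<forall>x y z :: 'a. x \<le> z \<longrightarrow> sup x (inf y z) = inf (sup x y) z)"

definition finite_length :: "'a::order itself \<Rightarrow> bool" where
  "finite_length _ \<longleftrightarrow> (\<forall>C :: 'a set. (\<forall>x\<in>C. \<forall>y\<in>C. x \<le> y \<or> y \<le> x) \<longrightarrow> finite C)"

definition covers :: "'a::order \<Rightarrow> 'a \<Rightarrow> bool" where
  "covers a b \<longleftrightarrow> a < b \<and> \<not> (\<exists>c. a < c \<and> c < b)"

definition star :: "'a::complete_lattice \<Rightarrow> 'a" where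
  "star a = (if a = top then top else Sup {b. covers a b})"

definition plus :: "'a::complete_lattice \<Rightarrow> 'a" where
  "plus a = (if a = bot then bot else Inf {b. covers b a})"

definition interval :: "'a::order \<Rightarrow> 'a \<Rightarrow> 'a set" where
  "interval a b = {x. a \<le> x \<and> x \<le> b}"

text \<open>Atomistic interval [a,b]: every element is a join (taken in [a,b], so the empty
  join is a) of atoms of [a,b].\<close>
definition atomistic :: "'a::complete_lattice \<Rightarrow> 'a \<Rightarrow> bool" where
  "atomistic a b \<longleftrightarrow> a \<le> b \<and>
     (\<forall>x\<in>interval a b. \<exists>A. A \<subseteq> {p. covers a p \<and> p \<le> b} \<and> x = sup a (Sup A))"

definition max_atomistic :: "'a::complete_lattice \<Rightarrow> 'a \<Rightarrow> bool" where
  "max_atomistic a b \<longleftrightarrow> atomistic a b \<and>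
     (\<forall>c d. atomistic c d \<and> interval a b \<subseteq> interval c d \<longrightarrow> interval a b = interval c d)"

definition skeleton :: "'a::complete_lattice set" where
  "skeleton = {a. \<exists>b. max_atomistic a b}"

definition dual_skeleton :: "'a::complete_lattice set" where
  "dual_skeleton = {b. \<exists>a. max_atomistic a b}"

end

theory Submission
  imports Defs "HOL-Library.Dual_Ordered_Lattice"
begin

text \<open>In a modular lattice of finite length an interval \<open>[a,b]\<close> is atomistic iff it is
  complemented. The interval \<open>[a, a\<^sup>*]\<close> is complemented, and every complemented
  \<open>[a,b]\<close> has \<open>b \<le> a\<^sup>*\<close>; dually \<open>[b\<^sup>+, b]\<close> is complemented and
  \<open>b\<^sup>+ \<le> a\<close>. Hence the maximal atomistic intervals are exactly the \<open>[a,b]\<close> with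
  \<open>b = a\<^sup>*\<close> and \<open>a = b\<^sup>+\<close>. Both operators are monotone (by modularity, an atom
  over \<open>a\<close> not below \<open>b \<ge> a\<close> transposes to an atom over \<open>b\<close>), so they restrict to
  mutually inverse order isomorphisms between the skeleton and the dual skeleton. Every fact
  about \<open>plus\<close> is obtained from its counterpart about \<open>star\<close> in the order dual.\<close>

unbundle lattice_syntax

section \<open>Order duality\<close>

lemma modular_lattice_dual:
  assumes "modular_lattice TYPE('a::lattice)"
  shows "modular_lattice TYPE('a dual)"
  unfolding modular_lattice_def
proof (intro allI impI)
  fix x y z :: "'a dual"
  assume "x \<le> z"
  then have "undual z \<squnion> (undual y \<sqinter> undual x) = (undual z \<squnion> undual y) \<sqinter> undual x"
    using assms unfolding modular_lattice_def by (simp add: dual_less_eq_iff)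
  then have "undual x \<sqinter> (undual y \<squnion> undual z) = (undual x \<sqinter> undual y) \<squnion> undual z"
    by (simp only: inf_commute sup_commute)
  then show "x \<squnion> (y \<sqinter> z) = (x \<squnion> y) \<sqinter> z"
    by (simp add: dual_eq_iff)
qed

lemma finite_length_dual:
  assumes "finite_length TYPE('a::order)"
  shows "finite_length TYPE('a dual)"
  unfolding finite_length_def
proof (intro allI impI)
  fix C :: "'a dual set"
  assume "\<forall>x\<in>C. \<forall>y\<in>C. x \<le> y \<or> y \<le> x"
  then have "finite (undual ` C)"
    using assms unfolding finite_length_def by (auto simp: dual_less_eq_iff)
  then show "finite C"
    by (meson finite_imageD inj_undual inj_on_subset subset_UNIV)
qed

lemma covers_dual_iff: "covers (dual a) (dual b) \<longleftrightarrow> covers b a"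
  unfolding covers_def by (metis dual_undual less_dual_iff)

lemma upper_covers_dual: "{c. covers (dual a) c} = dual ` {c. covers c a}"
  by (auto simp: image_iff) (metis covers_dual_iff dual_undual)+

lemma dual_eq_top_iff: "dual a = \<top> \<longleftrightarrow> a = \<bottom>"
  by (metis dual_bot_eq eq_dual_iff)

lemma star_dual: "star (dual a) = dual (plus a)"
  unfolding star_def plus_def by (simp add: upper_covers_dual dual_eq_top_iff)

section \<open>Covers and the operators \<open>star\<close> and \<open>plus\<close>\<close>

lemma finite_length_ex_maximal:
  assumes "finite_length TYPE('a::order)" and "x \<in> S"
  shows "\<exists>m\<in>S. \<forall>y\<in>S. \<not> m < (y::'a)"
proof -
  have "wf {(x, y :: 'a). y < x}"
    unfolding wf_iff_no_infinite_down_chain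
  proof
    assume "\<exists>f. \<forall>i. (f (Suc i), f i) \<in> {(x, y :: 'a). y < x}"
    then obtain f :: "nat \<Rightarrow> 'a" where "strict_mono f"
      by (auto simp: strict_mono_Suc_iff)
    have "f i \<le> f j \<or> f j \<le> f i" for i j
      using nat_le_linear[of i j] strict_mono_mono[OF \<open>strict_mono f\<close>] by (auto dest: monoD)
    then have "finite (range f)"
      by (intro assms(1)[unfolded finite_length_def, rule_format]) auto
    moreover have "infinite (range f)"
      using \<open>strict_mono f\<close> finite_imageD strict_mono_imp_inj_on by blast
    ultimately show False
      by contradiction
  qed
  then obtain m where "m \<in> S" and "\<And>y. (y, m) \<in> {(x, y). y < x} \<Longrightarrow> y \<notin> S"
    using wfE_min assms(2) by metis
  then show ?thesis
    by blast
qed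

lemma finite_length_ex_minimal:
  assumes "finite_length TYPE('a::order)" and "x \<in> S"
  shows "\<exists>m\<in>S. \<forall>y\<in>S. \<not> y < (m::'a)"
  using finite_length_ex_maximal[OF finite_length_dual[OF assms(1)], of "dual x" "dual ` S"] assms(2)
  by auto

lemma ex_upper_cover_le:
  assumes "finite_length TYPE('a::order)" and "a < (b::'a)"
  shows "\<exists>c. covers a c \<and> c \<le> b"
proof -
  obtain c where "a < c" "c \<le> b" and "\<forall>y. a < y \<and> y \<le> b \<longrightarrow> \<not> y < c"
    using finite_length_ex_minimal[OF assms(1), of b "{c. a < c \<and> c \<le> b}"] assms(2) by auto
  then show ?thesis
    unfolding covers_def by (meson less_imp_le order_trans)
qed

lemma modularD:
  assumes "modular_lattice TYPE('a::lattice)" and "x \<le> (z::'a)"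
  shows "x \<squnion> (y \<sqinter> z) = (x \<squnion> y) \<sqinter> z"
  using assms unfolding modular_lattice_def by blast

lemma covers_inf_cases:
  assumes "covers a p" and "a \<le> w"
  shows "p \<sqinter> w = a \<or> p \<le> (w::'a::lattice)"
  using assms unfolding covers_def
  by (metis inf.absorb_iff1 inf.orderE inf_le1 le_inf_iff order_le_less)

lemma covers_sup_transpose:
  assumes "modular_lattice TYPE('a::lattice)"
    and "covers a p" and "a \<le> t" and "\<not> p \<le> (t::'a)"
  shows "covers t (t \<squnion> p)"
  unfolding covers_def
proof (intro conjI notI)
  show "t < t \<squnion> p"
    using assms(4) by (simp add: less_le_not_le)
next
  assume "\<exists>c. t < c \<and> c < t \<squnion> p"
  then obtain c where c: "t < c" "c < t \<squnion> p"
    by blast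
  show False
    using covers_inf_cases[OF assms(2), of c]
  proof
    assume "p \<sqinter> c = a"
    have "c = t \<squnion> (p \<sqinter> c)"
      using modularD[OF assms(1), of t c p] c by (simp add: inf.absorb2 less_imp_le)
    with \<open>p \<sqinter> c = a\<close> c(1) assms(3) show False
      by (simp add: sup.absorb1)
  qed (use assms(3) c in \<open>auto simp: less_le_not_le\<close>)
qed

lemma le_star:
  assumes "finite_length TYPE('a::complete_lattice)"
  shows "a \<le> star (a::'a)"
proof (cases "a = \<top>")
  case False
  then obtain c where "covers a c"
    using ex_upper_cover_le[OF assms, of a \<top>] top.not_eq_extremum by blast
  then show ?thesis
    using False unfolding star_def by (auto simp: covers_def intro: Sup_upper2 less_imp_le)
qed (simp add: star_def)

lemma star_mono:
  assumes "modular_lattice TYPE('a::complete_lattice)" and "finite_length TYPE('a)"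
    and "a \<le> (b::'a)"
  shows "star a \<le> star b"
proof (cases "b = \<top>")
  case False
  then have "a \<noteq> \<top>"
    using assms(3) top.extremum_uniqueI by blast
  have "c \<le> star b" if "covers a c" for c
  proof (cases "c \<le> b")
    case True
    then show ?thesis
      using le_star[OF assms(2)] order_trans by blast
  next
    case False
    then have "b \<squnion> c \<in> {d. covers b d}"
      using covers_sup_transpose[OF assms(1) that assms(3)] by blast
    then have "b \<squnion> c \<le> \<Squnion>{d. covers b d}"
      by (rule Sup_upper)
    with \<open>b \<noteq> \<top>\<close> show ?thesis
      by (simp add: star_def)
  qed
  then have "\<Squnion>{c. covers a c} \<le> star b"
    by (blast intro: Sup_least)
  with \<open>a \<noteq> \<top>\<close> show ?thesis
    by (simp add: star_def[of a])
qed (simp add: star_def)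

lemma plus_mono:
  assumes "modular_lattice TYPE('a::complete_lattice)" and "finite_length TYPE('a)"
    and "a \<le> (b::'a)"
  shows "plus a \<le> plus b"
  using star_mono[OF modular_lattice_dual[OF assms(1)] finite_length_dual[OF assms(2)],
      of "dual b" "dual a"] assms(3)
  by (simp add: star_dual)

section \<open>Complemented intervals\<close>

definition complemented_interval :: "'a::lattice \<Rightarrow> 'a \<Rightarrow> bool" where
  "complemented_interval a b \<longleftrightarrow>
     a \<le> b \<and> (\<forall>x\<in>interval a b. \<exists>y\<in>interval a b. x \<sqinter> y = a \<and> x \<squnion> y = b)"

lemma interval_dual: "interval (dual b) (dual a) = dual ` interval a b"
  unfolding interval_def by (auto simp: image_iff) (metis dual_undual less_eq_dual_iff)

lemma complemented_interval_dual_iff: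
  "complemented_interval (dual b) (dual a) \<longleftrightarrow> complemented_interval a (b::'a::lattice)"
  unfolding complemented_interval_def interval_dual
  by (auto simp del: dual_sup_eq dual_inf_eq
      simp add: dual_sup_eq[symmetric] dual_inf_eq[symmetric] inf_commute sup_commute)

lemma inf_sup_atom_eq:
  assumes "modular_lattice TYPE('a::lattice)"
    and "covers a p" and "a \<le> y" and "x \<sqinter> y = a" and "\<not> p \<le> x \<squnion> (y::'a)"
  shows "x \<sqinter> (y \<squnion> p) = a"
proof -
  have "p \<sqinter> (x \<squnion> y) = a"
    using covers_inf_cases[OF assms(2), of "x \<squnion> y"] assms(3,5) by (simp add: le_supI2)
  then have "(y \<squnion> p) \<sqinter> (x \<squnion> y) = y"
    using modularD[OF assms(1), of y "x \<squnion> y" p] assms(3) by (simp add: sup.absorb1)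
  then have "x \<sqinter> (y \<squnion> p) = x \<sqinter> y"
    by (metis inf.assoc inf_commute inf_sup_absorb)
  with assms(4) show ?thesis
    by simp
qed

lemma complemented_interval_if_le_Sup_atoms:
  assumes "modular_lattice TYPE('a::complete_lattice)" and "finite_length TYPE('a)"
    and "a \<le> b" and "B \<subseteq> {p. covers a p \<and> p \<le> b}" and "b \<le> a \<squnion> \<Squnion>B"
  shows "complemented_interval a (b::'a)"
  unfolding complemented_interval_def
proof (intro conjI ballI)
  fix x
  assume "x \<in> interval a b"
  then have x: "a \<le> x" "x \<le> b"
    unfolding interval_def by auto
  txt \<open>A maximal \<open>y\<close> disjoint from \<open>x\<close> over \<open>a\<close> is a complement: an atom of \<open>B\<close>
    not below \<open>x \<squnion> y\<close> could be joined to \<open>y\<close>.\<close>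
  obtain y where y: "y \<in> interval a b" "x \<sqinter> y = a"
    and y_max: "\<And>z. z \<in> interval a b \<Longrightarrow> x \<sqinter> z = a \<Longrightarrow> \<not> y < z"
    using finite_length_ex_maximal[OF assms(2), of a "{y \<in> interval a b. x \<sqinter> y = a}"]
      x assms(3) by (auto simp: interval_def inf.absorb2)
  have "p \<le> x \<squnion> y" if "p \<in> B" for p
  proof (rule ccontr)
    assume p: "\<not> p \<le> x \<squnion> y"
    have "covers a p" "p \<le> b"
      using that assms(4) by auto
    then have "y \<squnion> p \<in> interval a b" "x \<sqinter> (y \<squnion> p) = a"
      using inf_sup_atom_eq[OF assms(1) \<open>covers a p\<close> _ y(2) p] y(1)
      by (auto simp: interval_def le_supI1)
    moreover have "y < y \<squnion> p"
      using p le_supI2 by (auto simp: less_le_not_le)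
    ultimately show False
      using y_max by blast
  qed
  then have "a \<squnion> \<Squnion>B \<le> x \<squnion> y"
    using x by (simp add: Sup_least le_supI1)
  then have "b \<le> x \<squnion> y"
    using assms(5) by (rule order_trans[rotated])
  then have "x \<squnion> y = b"
    using x y(1) by (intro order_antisym) (auto simp: interval_def)
  with y show "\<exists>y\<in>interval a b. x \<sqinter> y = a \<and> x \<squnion> y = b"
    by blast
qed (rule assms(3))

lemma complemented_interval_if_atomistic:
  assumes "modular_lattice TYPE('a::complete_lattice)" and "finite_length TYPE('a)"
    and "atomistic a (b::'a)"
  shows "complemented_interval a b"
proof -
  obtain A where "A \<subseteq> {p. covers a p \<and> p \<le> b}" "b = a \<squnion> \<Squnion>A"
    using assms(3) unfolding atomistic_def interval_def by auto
  then show ?thesis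
    using complemented_interval_if_le_Sup_atoms[OF assms(1,2)] assms(3)
    by (simp add: atomistic_def)
qed

lemma atomistic_if_complemented_interval:
  assumes "modular_lattice TYPE('a::complete_lattice)" and "finite_length TYPE('a)"
    and "complemented_interval a (b::'a)"
  shows "atomistic a b"
  unfolding atomistic_def
proof (intro conjI ballI)
  show "a \<le> b"
    using assms(3) unfolding complemented_interval_def by simp
  fix x
  assume "x \<in> interval a b"
  then have x: "a \<le> x" "x \<le> b"
    unfolding interval_def by auto
  txt \<open>A complement \<open>y\<close> of the join \<open>t\<close> of the atoms below \<open>x\<close> meets \<open>x\<close> in \<open>a\<close>, since
    every atom below \<open>x \<sqinter> y\<close> is below \<open>t \<sqinter> y\<close>; by modularity then \<open>x = t \<squnion> (x \<sqinter> y) = t\<close>.\<close>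
  define A where "A = {p. covers a p \<and> p \<le> x}"
  define t where "t = a \<squnion> \<Squnion>A"
  have "t \<le> x"
    using x(1) unfolding t_def A_def by (auto intro: Sup_least)
  then have "t \<in> interval a b"
    using x unfolding interval_def t_def by auto
  then obtain y where y: "y \<in> interval a b" "t \<sqinter> y = a" "t \<squnion> y = b"
    using assms(3) unfolding complemented_interval_def by blast
  have "x \<sqinter> y = a"
  proof (rule ccontr)
    assume "x \<sqinter> y \<noteq> a"
    then obtain q where q: "covers a q" "q \<le> x \<sqinter> y"
      using ex_upper_cover_le[OF assms(2), of a "x \<sqinter> y"] x y(1)
      by (auto simp: interval_def less_le)
    then have "q \<in> A"
      unfolding A_def by simp
    then have "q \<le> t"
      unfolding t_def by (intro le_supI2 Sup_upper)
    with q y(2) have "q \<le> a"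
      by (metis le_inf_iff)
    with q(1) show False
      by (simp add: covers_def less_le_not_le)
  qed
  have "x = t \<squnion> (x \<sqinter> y)"
    using modularD[OF assms(1) \<open>t \<le> x\<close>, of y] x(2) y(3) by (simp add: inf_commute inf.absorb2)
  with \<open>x \<sqinter> y = a\<close> have "x = t"
    by (simp add: t_def sup.absorb1)
  moreover have "A \<subseteq> {p. covers a p \<and> p \<le> b}"
    using x(2) unfolding A_def by auto
  ultimately show "\<exists>A. A \<subseteq> {p. covers a p \<and> p \<le> b} \<and> x = a \<squnion> \<Squnion>A"
    unfolding t_def by blast
qed

lemma atomistic_iff_complemented_interval:
  assumes "modular_lattice TYPE('a::complete_lattice)" and "finite_length TYPE('a)"
  shows "atomistic a (b::'a) \<longleftrightarrow> complemented_interval a b"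
  using assms atomistic_if_complemented_interval complemented_interval_if_atomistic by blast

lemma complemented_interval_star:
  assumes "modular_lattice TYPE('a::complete_lattice)" and "finite_length TYPE('a)"
  shows "complemented_interval a (star (a::'a))"
proof (rule complemented_interval_if_le_Sup_atoms[OF assms le_star[OF assms(2)]])
  show "{p. covers a p} \<subseteq> {p. covers a p \<and> p \<le> star a}"
    by (auto simp: star_def covers_def intro: Sup_upper)
  show "star a \<le> a \<squnion> \<Squnion>{p. covers a p}"
    by (simp add: star_def)
qed

lemma complemented_interval_plus:
  assumes "modular_lattice TYPE('a::complete_lattice)" and "finite_length TYPE('a)"
  shows "complemented_interval (plus (b::'a)) b"
  using complemented_interval_star[OF modular_lattice_dual[OF assms(1)]
      finite_length_dual[OF assms(2)], of "dual b"]
  by (simp add: star_dual complemented_interval_dual_iff)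

lemma le_star_if_complemented_interval:
  assumes "modular_lattice TYPE('a::complete_lattice)" and "finite_length TYPE('a)"
    and "complemented_interval a (b::'a)"
  shows "b \<le> star a"
proof (cases "a = \<top>")
  case False
  obtain A where "A \<subseteq> {p. covers a p \<and> p \<le> b}" "b = a \<squnion> \<Squnion>A"
    using atomistic_if_complemented_interval[OF assms] assms(3)
    unfolding atomistic_def complemented_interval_def interval_def by auto
  moreover have "\<Squnion>A \<le> star a"
    using False \<open>A \<subseteq> _\<close> unfolding star_def by (auto intro: Sup_subset_mono)
  ultimately show ?thesis
    using le_star[OF assms(2), of a] by simp
qed (simp add: star_def)

lemma plus_le_if_complemented_interval:
  assumes "modular_lattice TYPE('a::complete_lattice)" and "finite_length TYPE('a)"
    and "complemented_interval a (b::'a)"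
  shows "plus b \<le> a"
  using le_star_if_complemented_interval[OF modular_lattice_dual[OF assms(1)]
      finite_length_dual[OF assms(2)], of "dual b" "dual a"] assms(3)
  by (simp add: star_dual complemented_interval_dual_iff)

section \<open>Maximal atomistic intervals\<close>

lemma interval_subset_iff:
  "(a::'a::order) \<le> b \<Longrightarrow> interval a b \<subseteq> interval c d \<longleftrightarrow> c \<le> a \<and> b \<le> d"
  unfolding interval_def by (auto intro: order_trans)

lemma max_atomistic_iff:
  assumes "modular_lattice TYPE('a::complete_lattice)" and "finite_length TYPE('a)"
  shows "max_atomistic a (b::'a) \<longleftrightarrow> b = star a \<and> a = plus b"
proof
  assume max: "max_atomistic a b"
  then have "complemented_interval a b"
    using atomistic_iff_complemented_interval[OF assms] unfolding max_atomistic_def by blast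
  then have "a \<le> b" "b \<le> star a" "plus b \<le> a"
    using le_star_if_complemented_interval[OF assms] plus_le_if_complemented_interval[OF assms]
    unfolding complemented_interval_def by auto
  moreover have "atomistic a (star a)" "atomistic (plus b) b"
    using atomistic_iff_complemented_interval[OF assms] complemented_interval_star[OF assms]
      complemented_interval_plus[OF assms] by blast+
  ultimately have "interval a b = interval a (star a)" "interval a b = interval (plus b) b"
    using max unfolding max_atomistic_def by (simp_all add: interval_subset_iff)
  then show "b = star a \<and> a = plus b"
    using \<open>a \<le> b\<close> by (metis interval_subset_iff order.antisym order.refl)
next
  assume eq: "b = star a \<and> a = plus b"
  have "interval a b = interval c d" if "atomistic c d" "interval a b \<subseteq> interval c d" for c d
  proof -
    have "a \<le> b"
      using eq le_star[OF assms(2)] by blast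
    then have "c \<le> a" "b \<le> d"
      using that(2) interval_subset_iff by blast+
    have "complemented_interval c d"
      using that(1) atomistic_iff_complemented_interval[OF assms] by blast
    then have "d \<le> star c" "plus d \<le> c"
      using le_star_if_complemented_interval[OF assms] plus_le_if_complemented_interval[OF assms]
      by blast+
    moreover have "star c \<le> star a" "plus b \<le> plus d"
      using star_mono[OF assms] plus_mono[OF assms] \<open>c \<le> a\<close> \<open>b \<le> d\<close> by blast+
    ultimately have "a \<le> c" "d \<le> b"
      using eq by (metis order_trans)+
    with \<open>c \<le> a\<close> \<open>b \<le> d\<close> show ?thesis
      by simp
  qed
  moreover have "atomistic a b"
    using eq complemented_interval_star[OF assms] atomistic_iff_complemented_interval[OF assms]
    by blast
  ultimately show "max_atomistic a b"
    unfolding max_atomistic_def by blast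
qed

lemma skeleton_eq:
  assumes "modular_lattice TYPE('a::complete_lattice)" and "finite_length TYPE('a)"
  shows "(skeleton :: 'a set) = {a. plus (star a) = a}"
  unfolding skeleton_def max_atomistic_iff[OF assms] by auto

lemma dual_skeleton_eq:
  assumes "modular_lattice TYPE('a::complete_lattice)" and "finite_length TYPE('a)"
  shows "(dual_skeleton :: 'a set) = {b. star (plus b) = b}"
  unfolding dual_skeleton_def max_atomistic_iff[OF assms] by auto

theorem theorem6p4:
  assumes "modular_lattice TYPE('a::complete_lattice)"
    and "finite_length TYPE('a)"
  shows "(dual_skeleton :: 'a set) = {a. star (plus a) = a}
    \<and> bij_betw star (skeleton :: 'a set) dual_skeleton
    \<and> bij_betw plus (dual_skeleton :: 'a set) skeleton
    \<and> (\<forall>x\<in>(skeleton :: 'a set). plus (star x) = x)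
    \<and> (\<forall>a\<in>(dual_skeleton :: 'a set). star (plus a) = a)
    \<and> (\<forall>x\<in>(skeleton :: 'a set). \<forall>y\<in>skeleton. x \<le> y \<longleftrightarrow> star x \<le> star y)
    \<and> (\<forall>a\<in>(dual_skeleton :: 'a set). \<forall>b\<in>dual_skeleton. a \<le> b \<longleftrightarrow> plus a \<le> plus b)"
proof -
  note S = skeleton_eq[OF assms] and D = dual_skeleton_eq[OF assms]
  have "bij_betw star (skeleton :: 'a set) dual_skeleton"
    by (rule bij_betw_byWitness[where f' = plus]) (auto simp: S D)
  moreover have "bij_betw plus (dual_skeleton :: 'a set) skeleton"
    by (rule bij_betw_byWitness[where f' = star]) (auto simp: S D)
  moreover have "x \<le> y \<longleftrightarrow> star x \<le> star y" if "x \<in> skeleton" "y \<in> skeleton" for x y :: 'a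
  proof
    assume "star x \<le> star y"
    then have "plus (star x) \<le> plus (star y)"
      by (rule plus_mono[OF assms])
    with that show "x \<le> y"
      by (simp add: S)
  qed (rule star_mono[OF assms])
  moreover have "a \<le> b \<longleftrightarrow> plus a \<le> plus b" if "a \<in> dual_skeleton" "b \<in> dual_skeleton" for a b :: 'a
  proof
    assume "plus a \<le> plus b"
    then have "star (plus a) \<le> star (plus b)"
      by (rule star_mono[OF assms])
    with that show "a \<le> b"
      by (simp add: D)
  qed (rule plus_mono[OF assms])
  ultimately show ?thesis
    by (simp add: S D)
qed

end
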